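(* Let $n\ge 1$, $d\ge 2$ and $k_1,\dots,k_n\in\{1,\dots,d\}$. Let $\rho$ be a state on $(\mathbb{C}^d)^{\otimes n}$ that can be written as $\rho=\sum_j p_j|\psi_j\rangle\langle\psi_j|$ with $p_j\ge 0$, $\sum_j p_j=1$, where for every $j$ and every $i\in\{1,\dots,n\}$ the single-party reduced state $\mathrm{Tr}_{\overline{\{i\}}}|\psi_j\rangle\langle\psi_j|$ has rank at most $k_i$. Then $$\mathcal{C}_2(\rho)\le d^n+n-1-\sum_{i=1}^n\frac{d}{k_i}.$$
   Context: Consider $n$ qudits with Hilbert space $(\mathbb{C}^d)^{\otimes n}$. Let $\lambda_0=\mathbb{1}_d$ and let $\lambda_1,\dots,\lambda_{d^2-1}$ be Hermitian traceless $d\times d$ matrices normalized so that $\mathrm{Tr}[\lambda_i\lambda_j]=d\,\delta_{ij}$. For a nonempty subset $\alpha\subseteq\{1,\dots,n\}$ and a state $\rho$ with reduced state $\rho_\alpha$, define $\|\tau_\alpha(\rho)\|^2=\sum_{(i_k)_{k\in\alpha}\in\{1,\dots,d^2-1\}^{\alpha}}\big(\mathrm{Tr}[\rho_\alpha\bigotimes_{k\in\alpha}\lambda_{i_k}]\big)^2$, and $\mathcal{C}_2(\rho)=\sum_{|\alpha|\ge 2}\|\tau_\alpha(\rho)\|^2$. *)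

theory Defs
  imports Complex_Main "HOL-Library.FuncSet" "Jordan_Normal_Form.DL_Rank"
begin

text \<open>Computational basis configurations of the qudits in a set A of sites:
  functions A -> {0..<d} (undefined outside A).\<close>
definition configs :: "nat set \<Rightarrow> nat \<Rightarrow> (nat \<Rightarrow> nat) set" where
  "configs A d = PiE A (\<lambda>_. {..<d})"

definition merge :: "nat set \<Rightarrow> (nat \<Rightarrow> nat) \<Rightarrow> (nat \<Rightarrow> nat) \<Rightarrow> (nat \<Rightarrow> nat)" where
  "merge A x z = (\<lambda>i. if i \<in> A then x i else z i)"

text \<open>Operators on (C^d)^(tensor n), sites 1..n, as kernels on configurations.
  Reduced state on alpha: partial trace over the complement of alpha.\<close>
definition reduced :: "nat \<Rightarrow> nat \<Rightarrow> ((nat \<Rightarrow> nat) \<Rightarrow> (nat \<Rightarrow> nat) \<Rightarrow> complex)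
    \<Rightarrow> nat set \<Rightarrow> (nat \<Rightarrow> nat) \<Rightarrow> (nat \<Rightarrow> nat) \<Rightarrow> complex" where
  "reduced n d rho A x y = (\<Sum>z\<in>configs ({1..n} - A) d. rho (merge A x z) (merge A y z))"

text \<open>Tr[rho_alpha (tensor over k in alpha of lam (I k))].\<close>
definition corr :: "nat \<Rightarrow> nat \<Rightarrow> (nat \<Rightarrow> nat \<Rightarrow> nat \<Rightarrow> complex)
    \<Rightarrow> ((nat \<Rightarrow> nat) \<Rightarrow> (nat \<Rightarrow> nat) \<Rightarrow> complex) \<Rightarrow> nat set \<Rightarrow> (nat \<Rightarrow> nat) \<Rightarrow> complex" where
  "corr n d lam rho A I =
     (\<Sum>x\<in>configs A d. \<Sum>y\<in>configs A d.
        reduced n d rho A x y * (\<Prod>k\<in>A. lam (I k) (y k) (x k)))"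

text \<open>||tau_alpha(rho)||^2 (the traces are real since lam, rho are Hermitian).\<close>
definition tau_sq :: "nat \<Rightarrow> nat \<Rightarrow> (nat \<Rightarrow> nat \<Rightarrow> nat \<Rightarrow> complex)
    \<Rightarrow> ((nat \<Rightarrow> nat) \<Rightarrow> (nat \<Rightarrow> nat) \<Rightarrow> complex) \<Rightarrow> nat set \<Rightarrow> real" where
  "tau_sq n d lam rho A = (\<Sum>I\<in>PiE A (\<lambda>_. {1..d\<^sup>2 - 1}). (Re (corr n d lam rho A I))\<^sup>2)"

definition C2 :: "nat \<Rightarrow> nat \<Rightarrow> (nat \<Rightarrow> nat \<Rightarrow> nat \<Rightarrow> complex)
    \<Rightarrow> ((nat \<Rightarrow> nat) \<Rightarrow> (nat \<Rightarrow> nat) \<Rightarrow> complex) \<Rightarrow> real" where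
  "C2 n d lam rho = (\<Sum>A\<in>{A. A \<subseteq> {1..n} \<and> card A \<ge> 2}. tau_sq n d lam rho A)"

definition gm_basis :: "nat \<Rightarrow> (nat \<Rightarrow> nat \<Rightarrow> nat \<Rightarrow> complex) \<Rightarrow> bool" where
  "gm_basis d lam \<longleftrightarrow>
     (\<forall>i\<in>{1..d\<^sup>2 - 1}. (\<forall>a<d. \<forall>b<d. lam i b a = cnj (lam i a b)) \<and> (\<Sum>a<d. lam i a a) = 0) \<and>
     (\<forall>i\<in>{1..d\<^sup>2 - 1}. \<forall>j\<in>{1..d\<^sup>2 - 1}.
        (\<Sum>a<d. \<Sum>b<d. lam i a b * lam j b a) = (if i = j then of_nat d else 0))"

definition proj :: "((nat \<Rightarrow> nat) \<Rightarrow> complex) \<Rightarrow> (nat \<Rightarrow> nat) \<Rightarrow> (nat \<Rightarrow> nat) \<Rightarrow> complex" where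
  "proj psi x y = psi x * cnj (psi y)"

definition pt :: "nat \<Rightarrow> nat \<Rightarrow> (nat \<Rightarrow> nat)" where
  "pt i a = (\<lambda>k. if k = i then a else undefined)"

definition single_red :: "nat \<Rightarrow> nat \<Rightarrow> ((nat \<Rightarrow> nat) \<Rightarrow> (nat \<Rightarrow> nat) \<Rightarrow> complex) \<Rightarrow> nat \<Rightarrow> complex mat" where
  "single_red n d rho i = mat d d (\<lambda>(a, b). reduced n d rho {i} (pt i a) (pt i b))"

end

theory Submission
  imports Defs "Jordan_Normal_Form.Gram_Schmidt" "HOL-Analysis.Convex"
begin

text \<open>Adjoin \<open>\<lambda>\<^sub>0 = \<one>\<close> to the \<open>\<lambda>\<^sub>i\<close>. The tensor products \<open>\<Otimes>\<^sub>k \<lambda>\<^sub>I\<^sub>k\<close> then form a complete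
  orthogonal family of squared norm \<open>d\<^sup>n\<close>, so by Parseval the squared correlations summed over all
  multi-indices equal \<open>d\<^sup>n Tr \<rho>\<^sup>2 \<le> d\<^sup>n\<close>; each correlation of a subset \<open>\<alpha>\<close> occurs there once, its index
  padded by zeros. For a pure state the empty subset contributes \<open>1\<close>, and site \<open>i\<close> contributes
  \<open>d Tr \<rho>\<^sub>i\<^sup>2 - 1 \<ge> d/k\<^sub>i - 1\<close> because \<open>(Tr \<rho>\<^sub>i)\<^sup>2 \<le> rank \<rho>\<^sub>i \<cdot> Tr \<rho>\<^sub>i\<^sup>2\<close> by Cauchy-Schwarz on the
  column space. What is left bounds the subsets with \<open>|\<alpha>| \<ge> 2\<close>; mixtures follow by convexity of
  the square.\<close>

section \<open>The Gell-Mann family extended by the identity\<close>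

definition gm_ext :: "(nat \<Rightarrow> nat \<Rightarrow> nat \<Rightarrow> complex) \<Rightarrow> nat \<Rightarrow> nat \<Rightarrow> nat \<Rightarrow> complex" where
  "gm_ext lam m a b = (if m = 0 then of_bool (a = b) else lam m a b)"

lemma gm_ext_orthogonal:
  assumes gm: "gm_basis d lam" and m: "m < d\<^sup>2" and v: "v < d\<^sup>2"
  shows "(\<Sum>a<d. \<Sum>b<d. gm_ext lam m a b * cnj (gm_ext lam v a b)) = (if m = v then of_nat d else 0)"
proof -
  have idx: "\<And>i. i \<noteq> 0 \<Longrightarrow> i < d\<^sup>2 \<Longrightarrow> i \<in> {1..d\<^sup>2 - 1}" by auto
  have herm: "\<And>i a b. i \<in> {1..d\<^sup>2 - 1} \<Longrightarrow> a < d \<Longrightarrow> b < d \<Longrightarrow> cnj (lam i a b) = lam i b a"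
    using gm unfolding gm_basis_def by (metis complex_cnj_cnj)
  have traceless: "\<And>i. i \<in> {1..d\<^sup>2 - 1} \<Longrightarrow> (\<Sum>a<d. lam i a a) = 0"
    and orth: "\<And>i j. i \<in> {1..d\<^sup>2 - 1} \<Longrightarrow> j \<in> {1..d\<^sup>2 - 1} \<Longrightarrow>
        (\<Sum>a<d. \<Sum>b<d. lam i a b * lam j b a) = (if i = j then of_nat d else 0)"
    using gm unfolding gm_basis_def by blast+
  consider "m = 0" "v = 0" | "m = 0" "v \<noteq> 0" | "m \<noteq> 0" "v = 0" | "m \<noteq> 0" "v \<noteq> 0" by blast
  then show ?thesis
  proof cases
    case 2
    have "(\<Sum>a<d. \<Sum>b<d. gm_ext lam m a b * cnj (gm_ext lam v a b)) = cnj (\<Sum>a<d. lam v a a)"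
      using 2 by (simp add: gm_ext_def)
    then show ?thesis using 2 traceless[OF idx[OF _ v]] by simp
  next
    case 3
    have "gm_ext lam m a b * cnj (gm_ext lam v a b) = (if a = b then lam m a a else 0)" for a b
      using 3 by (simp add: gm_ext_def)
    then have "(\<Sum>a<d. \<Sum>b<d. gm_ext lam m a b * cnj (gm_ext lam v a b)) = (\<Sum>a<d. lam m a a)"
      by simp
    then show ?thesis using 3 traceless[OF idx[OF _ m]] by simp
  next
    case 4
    then show ?thesis
      using herm[OF idx[OF _ v]] orth[OF idx[OF _ m] idx[OF _ v]] by (simp add: gm_ext_def)
  qed (simp add: gm_ext_def)
qed

lemma sum_lessThan_mult_div_mod:
  fixes d :: nat and g :: "nat \<Rightarrow> nat \<Rightarrow> 'a::comm_monoid_add"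
  shows "(\<Sum>p<d * d. g (p div d) (p mod d)) = (\<Sum>a<d. \<Sum>b<d. g a b)"
proof -
  have bound: "a * d + b < d * d" if "a < d" "b < d" for a b :: nat
  proof -
    have "a * d + b < (a + 1) * d" using that by simp
    also have "\<dots> \<le> d * d" using that by (intro mult_le_mono1) simp
    finally show ?thesis .
  qed
  have "(\<Sum>p<d * d. g (p div d) (p mod d)) = (\<Sum>(a, b)\<in>{..<d} \<times> {..<d}. g a b)"
  proof (rule sum.reindex_bij_witness[of "{..<d * d}" "\<lambda>(a, b). a * d + b" "\<lambda>p. (p div d, p mod d)"
        "{..<d} \<times> {..<d}" "case_prod g"])
    fix p assume "p \<in> {..<d * d}"
    then have "0 < d" by (metis lessThan_iff mult_0 not_gr0 not_less0)
    with \<open>p \<in> {..<d * d}\<close> show "(p div d, p mod d) \<in> {..<d} \<times> {..<d}"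
      by (simp add: less_mult_imp_div_less)
  next
    fix q assume "q \<in> {..<d} \<times> {..<d}"
    then obtain a b where q: "q = (a, b)" "a < d" "b < d" by blast
    then show "(case q of (a, b) \<Rightarrow> a * d + b) \<in> {..<d * d}" using bound by simp
    show "((case q of (a, b) \<Rightarrow> a * d + b) div d, (case q of (a, b) \<Rightarrow> a * d + b) mod d) = q"
      using q by simp
  qed simp_all
  also have "\<dots> = (\<Sum>a<d. \<Sum>b<d. g a b)" by (rule sum.cartesian_product[symmetric])
  finally show ?thesis .
qed

text \<open>The \<open>d\<^sup>2 \<times> d\<^sup>2\<close> matrix of entries of the orthogonal family has a right inverse, hence a
  left inverse, which expresses the orthogonality of its columns.\<close>

lemma gm_ext_complete:
  assumes gm: "gm_basis d lam" and "0 < d"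
    and ab: "a < d" "b < d" "a' < d" "b' < d"
  shows "(\<Sum>m<d\<^sup>2. gm_ext lam m a b * cnj (gm_ext lam m a' b')) = (if a = a' \<and> b = b' then of_nat d else 0)"
proof -
  define N where "N = d * d"
  have N: "d\<^sup>2 = N" unfolding N_def by (simp add: power2_eq_square)
  define A :: "complex mat" where "A = mat N N (\<lambda>(m, p). gm_ext lam m (p div d) (p mod d))"
  define B :: "complex mat" where "B = mat N N (\<lambda>(p, m). cnj (gm_ext lam m (p div d) (p mod d)) / of_nat d)"
  have A: "A \<in> carrier_mat N N" and B: "B \<in> carrier_mat N N" unfolding A_def B_def by auto
  have "A * B = 1\<^sub>m N"
  proof (rule eq_matI)
    fix m v assume "m < dim_row (1\<^sub>m N)" "v < dim_col (1\<^sub>m N)"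
    then have m: "m < N" and v: "v < N" by auto
    have "(A * B) $$ (m, v) = (\<Sum>p<d * d. gm_ext lam m (p div d) (p mod d) * cnj (gm_ext lam v (p div d) (p mod d)) / of_nat d)"
      using A B m v by (simp add: A_def B_def N_def scalar_prod_def lessThan_atLeast0)
    also have "\<dots> = (\<Sum>a<d. \<Sum>b<d. gm_ext lam m a b * cnj (gm_ext lam v a b) / of_nat d)"
      by (rule sum_lessThan_mult_div_mod)
    also have "\<dots> = (\<Sum>a<d. \<Sum>b<d. gm_ext lam m a b * cnj (gm_ext lam v a b)) / of_nat d"
      by (simp add: sum_divide_distrib)
    also have "\<dots> = 1\<^sub>m N $$ (m, v)"
      using gm_ext_orthogonal[OF gm, of m v] m v N \<open>0 < d\<close> by simp
    finally show "(A * B) $$ (m, v) = 1\<^sub>m N $$ (m, v)" .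
  qed (auto simp: A_def B_def)
  then have BA: "B * A = 1\<^sub>m N" using mat_mult_left_right_inverse[OF A B] by blast
  define p q where "p = a * d + b" and "q = a' * d + b'"
  have pq: "p div d = a" "p mod d = b" "q div d = a'" "q mod d = b'"
    using ab unfolding p_def q_def by auto
  have "p < N" "q < N"
    using ab pq div_less_iff_less_mult[OF \<open>0 < d\<close>] unfolding N_def by metis+
  then have "(B * A) $$ (q, p) = (\<Sum>m<d\<^sup>2. gm_ext lam m a b * cnj (gm_ext lam m a' b')) / of_nat d"
    using A B by (simp add: A_def B_def N scalar_prod_def lessThan_atLeast0 pq sum_divide_distrib mult.commute)
  moreover have "(B * A) $$ (q, p) = of_bool (a = a' \<and> b = b')"
    using BA \<open>p < N\<close> \<open>q < N\<close> pq by (auto simp: p_def q_def)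
  ultimately have "(\<Sum>m<d\<^sup>2. gm_ext lam m a b * cnj (gm_ext lam m a' b')) = of_nat d * of_bool (a = a' \<and> b = b')"
    using \<open>0 < d\<close> by (simp add: divide_eq_eq mult.commute)
  then show ?thesis by simp
qed

section \<open>Trace and rank\<close>

lemma of_real_sum_cmod_sq: "complex_of_real (\<Sum>i\<in>A. (cmod (f i))\<^sup>2) = (\<Sum>i\<in>A. f i * cnj (f i))"
  by (simp only: of_real_sum complex_norm_square)

lemma cmod_sum_mult_sq_le:
  fixes f g :: "'a \<Rightarrow> complex"
  shows "(cmod (\<Sum>i\<in>A. f i * g i))\<^sup>2 \<le> (\<Sum>i\<in>A. (cmod (f i))\<^sup>2) * (\<Sum>i\<in>A. (cmod (g i))\<^sup>2)"
proof -
  have "cmod (\<Sum>i\<in>A. f i * g i) \<le> (\<Sum>i\<in>A. cmod (f i) * cmod (g i))"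
    by (metis (no_types, lifting) norm_mult norm_sum sum.cong)
  then have "(cmod (\<Sum>i\<in>A. f i * g i))\<^sup>2 \<le> (\<Sum>i\<in>A. cmod (f i) * cmod (g i))\<^sup>2"
    by (intro power_mono) auto
  also have "\<dots> \<le> (\<Sum>i\<in>A. (cmod (f i))\<^sup>2) * (\<Sum>i\<in>A. (cmod (g i))\<^sup>2)"
    by (rule Cauchy_Schwarz_ineq_sum)
  finally show ?thesis .
qed

text \<open>Cauchy-Schwarz over the pairs \<open>(l, a)\<close> in \<open>tr M = \<Sum>l a. X l a * w l a\<close>; the \<open>w\<close>-side
  contributes exactly \<open>r\<close>.\<close>

lemma cmod_trace_sq_le_of_orthonormal_factorization:
  fixes w X M :: "nat \<Rightarrow> nat \<Rightarrow> complex"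
  assumes orth: "\<forall>l<r. \<forall>l'<r. (\<Sum>a<d. w l a * cnj (w l' a)) = of_bool (l = l')"
    and factor: "\<forall>a<d. \<forall>b<d. M b a = (\<Sum>l<r. X l a * w l b)"
  shows "(cmod (\<Sum>a<d. M a a))\<^sup>2 \<le> real r * (\<Sum>a<d. \<Sum>b<d. (cmod (M a b))\<^sup>2)"
proof -
  let ?P = "{..<r} \<times> {..<d}"
  have column: "(\<Sum>b<d. (cmod (M b a))\<^sup>2) = (\<Sum>l<r. (cmod (X l a))\<^sup>2)" if "a < d" for a
  proof -
    have "complex_of_real (\<Sum>b<d. (cmod (M b a))\<^sup>2)
        = (\<Sum>b<d. \<Sum>l<r. \<Sum>l'<r. X l a * cnj (X l' a) * (w l b * cnj (w l' b)))"
      unfolding of_real_sum_cmod_sq using factor that by (simp add: sum_product mult_ac)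
    also have "\<dots> = (\<Sum>l<r. \<Sum>l'<r. X l a * cnj (X l' a) * (\<Sum>b<d. w l b * cnj (w l' b)))"
      by (simp add: sum_distrib_left sum.swap[of _ "{..<d}"])
    also have "\<dots> = (\<Sum>l<r. \<Sum>l'<r. X l a * cnj (X l' a) * of_bool (l = l'))"
      using orth by (intro sum.cong refl) auto
    also have "\<dots> = (\<Sum>l<r. X l a * cnj (X l a))"
      by (simp add: of_bool_def if_distrib cong: if_cong)
    finally show ?thesis unfolding of_real_sum_cmod_sq[symmetric] of_real_eq_iff .
  qed
  have unit: "(\<Sum>a<d. (cmod (w l a))\<^sup>2) = 1" if "l < r" for l
  proof -
    have "complex_of_real (\<Sum>a<d. (cmod (w l a))\<^sup>2) = 1"
      unfolding of_real_sum_cmod_sq using orth that by simp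
    then show ?thesis by (simp only: of_real_eq_1_iff)
  qed
  have "(\<Sum>a<d. M a a) = (\<Sum>a<d. \<Sum>l<r. X l a * w l a)"
    using factor by simp
  also have "\<dots> = (\<Sum>(l, a)\<in>?P. X l a * w l a)"
    by (subst sum.swap) (rule sum.cartesian_product)
  finally have "(cmod (\<Sum>a<d. M a a))\<^sup>2 \<le> (\<Sum>(l, a)\<in>?P. (cmod (X l a))\<^sup>2) * (\<Sum>(l, a)\<in>?P. (cmod (w l a))\<^sup>2)"
    using cmod_sum_mult_sq_le[of "\<lambda>(l, a). X l a" "\<lambda>(l, a). w l a" ?P] by (simp add: case_prod_beta)
  also have "(\<Sum>(l, a)\<in>?P. (cmod (w l a))\<^sup>2) = real r"
    using unit by (simp add: sum.cartesian_product[symmetric])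
  also have "(\<Sum>(l, a)\<in>?P. (cmod (X l a))\<^sup>2) = (\<Sum>a<d. \<Sum>l<r. (cmod (X l a))\<^sup>2)"
    by (subst sum.swap) (rule sum.cartesian_product[symmetric])
  also have "\<dots> = (\<Sum>a<d. \<Sum>b<d. (cmod (M b a))\<^sup>2)"
    using column by simp
  also have "\<dots> = (\<Sum>a<d. \<Sum>b<d. (cmod (M a b))\<^sup>2)"
    by (rule sum.swap)
  finally show ?thesis by (simp add: mult.commute)
qed

lemma cols_in_span_of_corthogonal:
  fixes M :: "complex mat"
  assumes M: "M \<in> carrier_mat d d"
  obtains us where "set us \<subseteq> carrier_vec d" "corthogonal us" "length us \<le> vec_space.rank d M"
    "\<And>a. a < d \<Longrightarrow> \<exists>c. col M a = mat_of_cols d us *\<^sub>v vec (length us) c"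
proof -
  interpret cof_vec_space d "TYPE(complex)" .
  let ?P = "\<lambda>T. T \<subseteq> set (cols M) \<and> lin_indpt T"
  have "lin_indpt {}"
    by (metis empty_subsetI fin_dim finite_basis_exists subset_li_is_li vec_vs vectorspace.basis_def)
  then obtain S where "finite S" and maxS: "maximal S ?P"
    using maximal_exists_superset[of "set (cols M)" ?P "{}"] by auto
  have Scols: "S \<subseteq> set (cols M)" and indS: "lin_indpt S" using maxS unfolding maximal_def by auto
  have colsC: "set (cols M) \<subseteq> carrier_vec d" using M cols_dim by blast
  then have SC: "S \<subseteq> carrier_vec d" using Scols by blast
  have inspan: "v \<in> span S" if v: "v \<in> set (cols M)" for v
  proof (rule ccontr)
    assume nv: "v \<notin> span S"
    have vC: "v \<in> carrier_vec d" using v colsC by blast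
    have "v \<notin> S" using nv span_mem[OF SC] by blast
    then have "lin_indpt (S \<union> {v})" using lin_dep_iff_in_span[OF SC indS vC] nv by blast
    then have "S \<union> {v} = S" using maxS Scols v unfolding maximal_def by blast
    then show False using \<open>v \<notin> S\<close> by blast
  qed
  obtain ws where ws: "set ws = S" "distinct ws" using finite_distinct_list[OF \<open>finite S\<close>] by blast
  define us where "us = gram_schmidt d ws"
  have "span (set ws) = span (set us)" "corthogonal us" "set us \<subseteq> carrier_vec d" "length us = length ws"
    using gram_schmidt_result[OF _ ws(2) _ us_def] ws SC indS by auto
  moreover have "length ws = rank M"
    using rank_card_indpt[OF M maxS] ws distinct_card by fastforce
  moreover have "\<exists>c. col M a = mat_of_cols d us *\<^sub>v vec (length us) c" if "a < d" for a
  proof -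
    have "col M a \<in> set (cols M)" using that M by (simp add: cols_def)
    then have "col M a \<in> span_list us"
      using inspan ws \<open>span (set ws) = span (set us)\<close> span_list_as_span[OF \<open>set us \<subseteq> carrier_vec d\<close>] by auto
    then obtain c where "col M a = lincomb_list c us" by (auto elim: in_span_listE)
    also have "\<dots> = mat_of_cols d us *\<^sub>v vec (length us) c"
      using \<open>set us \<subseteq> carrier_vec d\<close> by (intro lincomb_list_as_mat_mult) auto
    finally show ?thesis by blast
  qed
  ultimately show ?thesis using that by simp
qed

lemma corthogonal_normalize:
  assumes usC: "set us \<subseteq> carrier_vec d" and orth: "corthogonal us"
  obtains s w where "\<forall>l<length us. \<forall>l'<length us. (\<Sum>a<d. w l a * cnj (w l' a)) = of_bool (l = l')"
    "\<forall>l<length us. \<forall>b<d. (us ! l) $ b = s l * w l b"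
proof -
  let ?r = "length us"
  have inner: "(\<Sum>i<d. (us ! l) $ i * cnj ((us ! l') $ i)) = us ! l \<bullet>c us ! l'" if "l' < ?r" for l l'
  proof -
    have "dim_vec (us ! l') = d" using usC that by (meson carrier_vecD nth_mem subsetD)
    then show ?thesis by (simp add: scalar_prod_def lessThan_atLeast0)
  qed
  define N where "N l = (\<Sum>i<d. (cmod ((us ! l) $ i))\<^sup>2)" for l
  have N: "complex_of_real (N l) = us ! l \<bullet>c us ! l" if "l < ?r" for l
    unfolding N_def of_real_sum_cmod_sq using inner[OF that] .
  have nonzero: "us ! l \<bullet>c us ! l \<noteq> 0" if "l < ?r" for l
    using orth that unfolding corthogonal_def by blast
  have Npos: "0 < N l" if "l < ?r" for l
  proof -
    have "N l \<noteq> 0" using N[OF that] nonzero[OF that] by auto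
    moreover have "0 \<le> N l" unfolding N_def by (simp add: sum_nonneg)
    ultimately show ?thesis by linarith
  qed
  define w where "w l b = (us ! l) $ b / complex_of_real (sqrt (N l))" for l b
  have "(\<Sum>a<d. w l a * cnj (w l' a)) = of_bool (l = l')" if "l < ?r" "l' < ?r" for l l'
  proof -
    have "(\<Sum>a<d. w l a * cnj (w l' a)) = us ! l \<bullet>c us ! l' / complex_of_real (sqrt (N l) * sqrt (N l'))"
      unfolding w_def inner[OF that(2), symmetric] by (simp add: sum_divide_distrib)
    also have "\<dots> = of_bool (l = l')"
    proof (cases "l = l'")
      case True
      have "complex_of_real (sqrt (N l) * sqrt (N l)) = us ! l \<bullet>c us ! l"
        using N[OF that(1)] Npos[OF that(1)] by simp
      then show ?thesis using True nonzero[OF that(1)] by simp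
    next
      case False
      then show ?thesis using orth that unfolding corthogonal_def by simp
    qed
    finally show ?thesis .
  qed
  moreover have "(us ! l) $ b = complex_of_real (sqrt (N l)) * w l b" if "l < ?r" for l b
    using Npos[OF that] by (simp add: w_def)
  ultimately show ?thesis by (intro that[of w "\<lambda>l. complex_of_real (sqrt (N l))"]) auto
qed

lemma orthonormal_column_factorization:
  fixes M :: "complex mat"
  assumes M: "M \<in> carrier_mat d d"
  obtains r w X where "r \<le> vec_space.rank d M"
    "\<forall>l<r. \<forall>l'<r. (\<Sum>a<d. w l a * cnj (w l' a)) = of_bool (l = l')"
    "\<forall>a<d. \<forall>b<d. M $$ (b, a) = (\<Sum>l<r. X l a * w l b)"
proof -
  obtain us where usC: "set us \<subseteq> carrier_vec d" and orth: "corthogonal us"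
    and len: "length us \<le> vec_space.rank d M"
    and span: "\<And>a. a < d \<Longrightarrow> \<exists>c. col M a = mat_of_cols d us *\<^sub>v vec (length us) c"
    using cols_in_span_of_corthogonal[OF M] by blast
  obtain s w where orthonormal: "\<forall>l<length us. \<forall>l'<length us. (\<Sum>a<d. w l a * cnj (w l' a)) = of_bool (l = l')"
    and scale: "\<forall>l<length us. \<forall>b<d. (us ! l) $ b = s l * w l b"
    by (rule corthogonal_normalize[OF usC orth])
  obtain C where C: "\<And>a. a < d \<Longrightarrow> col M a = mat_of_cols d us *\<^sub>v vec (length us) (C a)"
    using span by metis
  have factor: "M $$ (b, a) = (\<Sum>l<length us. C a l * s l * w l b)" if "a < d" "b < d" for a b
  proof -
    have "M $$ (b, a) = col M a $ b" using M that by simp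
    also have "\<dots> = (mat_of_cols d us *\<^sub>v vec (length us) (C a)) $ b" using C[OF that(1)] by simp
    also have "\<dots> = (\<Sum>l<length us. (us ! l) $ b * C a l)"
      using that by (simp add: scalar_prod_def row_def mat_of_cols_index lessThan_atLeast0)
    also have "\<dots> = (\<Sum>l<length us. C a l * s l * w l b)"
      using scale that by (intro sum.cong refl) (simp add: mult_ac)
    finally show ?thesis .
  qed
  show ?thesis by (rule that[of "length us" w "\<lambda>l a. C a l * s l"]) (use len orthonormal factor in auto)
qed

lemma cmod_trace_sq_le_rank:
  fixes M :: "complex mat"
  assumes M: "M \<in> carrier_mat d d"
  shows "(cmod (\<Sum>a<d. M $$ (a, a)))\<^sup>2 \<le> real (vec_space.rank d M) * (\<Sum>a<d. \<Sum>b<d. (cmod (M $$ (a, b)))\<^sup>2)"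
proof -
  obtain r w X where r: "r \<le> vec_space.rank d M"
    and orth: "\<forall>l<r. \<forall>l'<r. (\<Sum>a<d. w l a * cnj (w l' a)) = of_bool (l = l')"
    and factor: "\<forall>a<d. \<forall>b<d. M $$ (b, a) = (\<Sum>l<r. X l a * w l b)"
    using orthonormal_column_factorization[OF M] by blast
  have "(cmod (\<Sum>a<d. M $$ (a, a)))\<^sup>2 \<le> real r * (\<Sum>a<d. \<Sum>b<d. (cmod (M $$ (a, b)))\<^sup>2)"
    using cmod_trace_sq_le_of_orthonormal_factorization[OF orth, of "\<lambda>b a. M $$ (b, a)" X] factor
    by simp
  also have "\<dots> \<le> real (vec_space.rank d M) * (\<Sum>a<d. \<Sum>b<d. (cmod (M $$ (a, b)))\<^sup>2)"
    using r by (intro mult_right_mono sum_nonneg) auto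
  finally show ?thesis .
qed

lemma finite_configs: "finite S \<Longrightarrow> finite (configs S d)"
  unfolding configs_def by (intro finite_PiE) auto

lemma configs_eq_iff:
  assumes "X \<in> configs S d" "X' \<in> configs S d"
  shows "(\<forall>k\<in>S. X k = X' k) \<longleftrightarrow> X = X'"
  using assms unfolding configs_def by (metis PiE_ext)

lemma merge_in_configs:
  assumes "A \<subseteq> S" "x \<in> configs A d" "z \<in> configs (S - A) d"
  shows "merge A x z \<in> configs S d"
  using assms unfolding configs_def merge_def PiE_def extensional_def Pi_def by auto

lemma bij_betw_merge:
  assumes "A \<subseteq> S"
  shows "bij_betw (\<lambda>(x, z). merge A x z) (configs A d \<times> configs (S - A) d) (configs S d)"
proof (rule bij_betw_byWitness[where f' = "\<lambda>X. (restrict X A, restrict X (S - A))"])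
  show "\<forall>q\<in>configs A d \<times> configs (S - A) d.
      (\<lambda>X. (restrict X A, restrict X (S - A))) ((\<lambda>(x, z). merge A x z) q) = q"
    unfolding configs_def merge_def by (force simp: PiE_def extensional_def)
  show "\<forall>X\<in>configs S d. (\<lambda>(x, z). merge A x z) (restrict X A, restrict X (S - A)) = X"
    using assms unfolding configs_def merge_def by (force simp: PiE_def extensional_def)
  show "(\<lambda>(x, z). merge A x z) ` (configs A d \<times> configs (S - A) d) \<subseteq> configs S d"
    using merge_in_configs[OF assms] by auto
  show "(\<lambda>X. (restrict X A, restrict X (S - A))) ` configs S d \<subseteq> configs A d \<times> configs (S - A) d"
    using assms unfolding configs_def by auto
qed

lemma sum_configs_merge:
  assumes "A \<subseteq> S"
  shows "(\<Sum>X\<in>configs S d. f X) = (\<Sum>x\<in>configs A d. \<Sum>z\<in>configs (S - A) d. f (merge A x z))"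
  using sum.reindex_bij_betw[OF bij_betw_merge[OF assms], of f]
  by (simp add: sum.cartesian_product case_prod_beta)

lemma sum_PiE_singleton: "(\<Sum>I\<in>PiE {i} (\<lambda>_. B). f I) = (\<Sum>m\<in>B. f (pt i m))"
proof -
  have "PiE {i} (\<lambda>_. B) = pt i ` B"
    unfolding PiE_over_singleton_iff pt_def by (auto simp: restrict_def)
  moreover have "inj_on (pt i) B" unfolding inj_on_def pt_def by metis
  ultimately show ?thesis by (simp add: sum.reindex)
qed

lemma prod_of_bool:
  "finite A \<Longrightarrow> (\<Prod>k\<in>A. of_bool (P k) :: 'a::comm_semiring_1) = of_bool (\<forall>k\<in>A. P k)"
  by (induction A rule: finite_induct) auto

section \<open>Bloch coefficients\<close>

text \<open>\<open>bloch_coeff lam S d rho I = Tr[rho (\<Otimes>k\<in>S. \<lambda>\<^sub>I\<^sub>k)]\<close> with \<open>\<lambda>\<^sub>0 = \<one>\<close>.\<close>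

definition bloch_coeff :: "(nat \<Rightarrow> nat \<Rightarrow> nat \<Rightarrow> complex) \<Rightarrow> nat set \<Rightarrow> nat \<Rightarrow>
    ((nat \<Rightarrow> nat) \<Rightarrow> (nat \<Rightarrow> nat) \<Rightarrow> complex) \<Rightarrow> (nat \<Rightarrow> nat) \<Rightarrow> complex" where
  "bloch_coeff lam S d rho I = (\<Sum>x\<in>configs S d. \<Sum>y\<in>configs S d.
      rho x y * (\<Prod>k\<in>S. gm_ext lam (I k) (y k) (x k)))"

lemma sum_prod_gm_ext_complete:
  assumes gm: "gm_basis d lam" and "0 < d" and "finite S"
    and q: "q \<in> configs S d \<times> configs S d" and q': "q' \<in> configs S d \<times> configs S d"
  shows "(\<Sum>I\<in>PiE S (\<lambda>_. {..<d\<^sup>2}). (\<Prod>k\<in>S. gm_ext lam (I k) (snd q k) (fst q k)) *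
            cnj (\<Prod>k\<in>S. gm_ext lam (I k) (snd q' k) (fst q' k)))
        = of_bool (q = q') * of_nat d ^ card S"
proof -
  have range: "X k < d" if "X \<in> configs S d" "k \<in> S" for X k
    using that unfolding configs_def by auto
  have "(\<Sum>I\<in>PiE S (\<lambda>_. {..<d\<^sup>2}). (\<Prod>k\<in>S. gm_ext lam (I k) (snd q k) (fst q k)) *
            cnj (\<Prod>k\<in>S. gm_ext lam (I k) (snd q' k) (fst q' k)))
      = (\<Prod>k\<in>S. \<Sum>m<d\<^sup>2. gm_ext lam m (snd q k) (fst q k) * cnj (gm_ext lam m (snd q' k) (fst q' k)))"
    using \<open>finite S\<close> by (simp add: prod_sum_PiE prod.distrib)
  also have "\<dots> = (\<Prod>k\<in>S. of_bool (snd q k = snd q' k \<and> fst q k = fst q' k) * of_nat d)"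
    using q q' range by (intro prod.cong refl) (auto simp: gm_ext_complete[OF gm \<open>0 < d\<close>])
  also have "\<dots> = of_bool (\<forall>k\<in>S. snd q k = snd q' k \<and> fst q k = fst q' k) * of_nat d ^ card S"
    using \<open>finite S\<close> by (simp add: prod.distrib prod_of_bool)
  also have "(\<forall>k\<in>S. snd q k = snd q' k \<and> fst q k = fst q' k) \<longleftrightarrow> q = q'"
    using configs_eq_iff[of "fst q" S d "fst q'"] configs_eq_iff[of "snd q" S d "snd q'"] q q'
    by (auto simp: prod_eq_iff)
  finally show ?thesis .
qed

lemma bloch_coeff_parseval:
  assumes gm: "gm_basis d lam" and "0 < d" and "finite S"
  shows "(\<Sum>I\<in>PiE S (\<lambda>_. {..<d\<^sup>2}). (cmod (bloch_coeff lam S d rho I))\<^sup>2)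
      = real d ^ card S * (\<Sum>x\<in>configs S d. \<Sum>y\<in>configs S d. (cmod (rho x y))\<^sup>2)"
proof -
  let ?Q = "configs S d \<times> configs S d"
  let ?P = "\<lambda>I q. \<Prod>k\<in>S. gm_ext lam (I k) (snd q k) (fst q k)"
  let ?r = "\<lambda>q. rho (fst q) (snd q)"
  have "finite ?Q" using finite_configs[OF \<open>finite S\<close>] by simp
  have coeff: "bloch_coeff lam S d rho I = (\<Sum>q\<in>?Q. ?r q * ?P I q)" for I
    unfolding bloch_coeff_def by (simp add: sum.cartesian_product case_prod_beta)
  have "complex_of_real (\<Sum>I\<in>PiE S (\<lambda>_. {..<d\<^sup>2}). (cmod (bloch_coeff lam S d rho I))\<^sup>2)
      = (\<Sum>I\<in>PiE S (\<lambda>_. {..<d\<^sup>2}). \<Sum>q\<in>?Q. \<Sum>q'\<in>?Q. ?r q * cnj (?r q') * (?P I q * cnj (?P I q')))"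
    unfolding of_real_sum_cmod_sq coeff by (simp add: sum_product cnj_sum mult_ac)
  also have "\<dots> = (\<Sum>q\<in>?Q. \<Sum>q'\<in>?Q. ?r q * cnj (?r q') * (\<Sum>I\<in>PiE S (\<lambda>_. {..<d\<^sup>2}). ?P I q * cnj (?P I q')))"
    by (simp add: sum_distrib_left sum.swap[of _ "PiE S (\<lambda>_. {..<d\<^sup>2})"])
  also have "\<dots> = (\<Sum>q\<in>?Q. \<Sum>q'\<in>?Q. ?r q * cnj (?r q') * (of_bool (q = q') * of_nat d ^ card S))"
    using sum_prod_gm_ext_complete[OF gm \<open>0 < d\<close> \<open>finite S\<close>] by (intro sum.cong refl) simp
  also have "\<dots> = of_nat d ^ card S * (\<Sum>q\<in>?Q. ?r q * cnj (?r q))"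
    using \<open>finite ?Q\<close> by (simp add: sum_distrib_left mult_ac)
  also have "\<dots> = complex_of_real (real d ^ card S * (\<Sum>q\<in>?Q. (cmod (?r q))\<^sup>2))"
    by (simp only: of_real_mult of_real_power of_real_of_nat_eq of_real_sum_cmod_sq)
  finally show ?thesis
    unfolding of_real_eq_iff by (simp add: sum.cartesian_product case_prod_beta)
qed

lemma bloch_coeff_identity:
  assumes "finite S" and "\<forall>k\<in>S. I k = 0"
  shows "bloch_coeff lam S d rho I = (\<Sum>x\<in>configs S d. rho x x)"
proof -
  have "bloch_coeff lam S d rho I = (\<Sum>x\<in>configs S d. \<Sum>y\<in>configs S d. if y = x then rho x y else 0)"
    unfolding bloch_coeff_def
  proof (intro sum.cong refl)
    fix x y assume "x \<in> configs S d" "y \<in> configs S d"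
    then show "rho x y * (\<Prod>k\<in>S. gm_ext lam (I k) (y k) (x k)) = (if y = x then rho x y else 0)"
      using assms configs_eq_iff[of y S d x] by (simp add: gm_ext_def prod_of_bool)
  qed
  also have "\<dots> = (\<Sum>x\<in>configs S d. rho x x)"
    using finite_configs[OF \<open>finite S\<close>] by simp
  finally show ?thesis .
qed

lemma corr_eq_bloch_coeff:
  assumes "\<forall>k\<in>A. I k \<noteq> 0"
  shows "corr n d lam rho A I = bloch_coeff lam A d (reduced n d rho A) I"
  unfolding corr_def bloch_coeff_def
  using assms by (intro sum.cong refl arg_cong2[where f = "(*)"] prod.cong) (auto simp: gm_ext_def)

definition pad_index :: "nat set \<Rightarrow> nat set \<Rightarrow> (nat \<Rightarrow> nat) \<Rightarrow> nat \<Rightarrow> nat" where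
  "pad_index S A I = (\<lambda>k. if k \<in> A then I k else if k \<in> S then 0 else undefined)"

lemma prod_gm_ext_pad_index:
  assumes "A \<subseteq> S" "finite S"
    and "x \<in> configs A d" "y \<in> configs A d" "z \<in> configs (S - A) d" "w \<in> configs (S - A) d"
  shows "(\<Prod>k\<in>S. gm_ext lam (pad_index S A I k) (merge A y w k) (merge A x z k))
       = (\<Prod>k\<in>A. gm_ext lam (I k) (y k) (x k)) * of_bool (w = z)"
proof -
  have "(\<Prod>k\<in>S. gm_ext lam (pad_index S A I k) (merge A y w k) (merge A x z k))
      = (\<Prod>k\<in>A. gm_ext lam (pad_index S A I k) (merge A y w k) (merge A x z k)) *
        (\<Prod>k\<in>S - A. gm_ext lam (pad_index S A I k) (merge A y w k) (merge A x z k))"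
    using prod.subset_diff[OF assms(1,2)] by (simp add: mult.commute)
  also have "\<dots> = (\<Prod>k\<in>A. gm_ext lam (I k) (y k) (x k)) * (\<Prod>k\<in>S - A. of_bool (w k = z k))"
    by (intro arg_cong2[where f = "(*)"] prod.cong refl) (auto simp: gm_ext_def pad_index_def merge_def)
  also have "(\<Prod>k\<in>S - A. of_bool (w k = z k)) = (of_bool (w = z) :: complex)"
    using assms(2) configs_eq_iff[OF assms(6,5)] by (simp add: prod_of_bool)
  finally show ?thesis .
qed

lemma bloch_coeff_reduced:
  assumes AS: "A \<subseteq> {1..n}"
  shows "bloch_coeff lam A d (reduced n d rho A) I = bloch_coeff lam {1..n} d rho (pad_index {1..n} A I)"
proof -
  let ?S = "{1..n}"
  let ?cA = "configs A d" and ?cB = "configs (?S - A) d"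
  let ?L = "\<lambda>x y. \<Prod>k\<in>A. gm_ext lam (I k) (y k) (x k)"
  have "bloch_coeff lam ?S d rho (pad_index ?S A I) = (\<Sum>x\<in>?cA. \<Sum>z\<in>?cB. \<Sum>y\<in>?cA. \<Sum>w\<in>?cB.
      rho (merge A x z) (merge A y w) * (\<Prod>k\<in>?S. gm_ext lam (pad_index ?S A I k) (merge A y w k) (merge A x z k)))"
    unfolding bloch_coeff_def by (simp only: sum_configs_merge[OF AS])
  also have "\<dots> = (\<Sum>x\<in>?cA. \<Sum>z\<in>?cB. \<Sum>y\<in>?cA. \<Sum>w\<in>?cB.
      if w = z then rho (merge A x z) (merge A y z) * ?L x y else 0)"
    by (intro sum.cong refl) (subst prod_gm_ext_pad_index[OF AS], auto)
  also have "\<dots> = (\<Sum>x\<in>?cA. \<Sum>z\<in>?cB. \<Sum>y\<in>?cA. rho (merge A x z) (merge A y z) * ?L x y)"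
    using finite_configs[of "?S - A" d] by simp
  also have "\<dots> = (\<Sum>x\<in>?cA. \<Sum>y\<in>?cA. \<Sum>z\<in>?cB. rho (merge A x z) (merge A y z) * ?L x y)"
    by (intro sum.cong refl sum.swap)
  also have "\<dots> = bloch_coeff lam A d (reduced n d rho A) I"
    unfolding bloch_coeff_def reduced_def by (simp add: sum_distrib_right)
  finally show ?thesis by simp
qed

lemma inj_on_pad_index: "inj_on (\<lambda>(A, I). pad_index S A I) (Sigma (Pow S) (\<lambda>A. PiE A (\<lambda>_. {1..m})))"
proof (rule inj_onI)
  fix p p' assume "p \<in> Sigma (Pow S) (\<lambda>A. PiE A (\<lambda>_. {1..m}))" "p' \<in> Sigma (Pow S) (\<lambda>A. PiE A (\<lambda>_. {1..m}))"
    and eq: "(\<lambda>(A, I). pad_index S A I) p = (\<lambda>(A, I). pad_index S A I) p'"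
  then obtain A I A' I' where p: "p = (A, I)" "A \<subseteq> S" "I \<in> PiE A (\<lambda>_. {1..m})"
    and p': "p' = (A', I')" "A' \<subseteq> S" "I' \<in> PiE A' (\<lambda>_. {1..m})" by auto
  have eq': "pad_index S A I = pad_index S A' I'" using eq p p' by simp
  have "\<forall>k\<in>A. I k \<noteq> 0" "\<forall>k\<in>A'. I' k \<noteq> 0" using p p' by (auto simp: PiE_iff)
  then have "A = {k\<in>S. pad_index S A I k \<noteq> 0}" "A' = {k\<in>S. pad_index S A' I' k \<noteq> 0}"
    using p p' by (auto simp: pad_index_def)
  then have "A = A'" using eq' by simp
  moreover have "I = I'"
  proof (rule PiE_ext)
    show "I \<in> PiE A (\<lambda>_. {1..m})" "I' \<in> PiE A (\<lambda>_. {1..m})" using p p' \<open>A = A'\<close> by simp_all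
    show "I k = I' k" if "k \<in> A" for k
      using fun_cong[OF eq', of k] \<open>A = A'\<close> that by (simp add: pad_index_def)
  qed
  ultimately show "p = p'" using p p' by simp
qed

lemma pad_index_in_PiE:
  assumes "A \<subseteq> S" "I \<in> PiE A (\<lambda>_. {1..m})" "m < M"
  shows "pad_index S A I \<in> PiE S (\<lambda>_. {..<M})"
  using assms by (auto simp: pad_index_def PiE_def extensional_def Pi_def)

section \<open>Bound for states with bounded single-site ranks\<close>

text \<open>\<open>tau_sq\<close> with moduli in place of real parts, so that no Hermiticity of \<open>rho\<close> is needed.\<close>

definition tau_cmod_sq :: "nat \<Rightarrow> nat \<Rightarrow> (nat \<Rightarrow> nat \<Rightarrow> nat \<Rightarrow> complex)
    \<Rightarrow> ((nat \<Rightarrow> nat) \<Rightarrow> (nat \<Rightarrow> nat) \<Rightarrow> complex) \<Rightarrow> nat set \<Rightarrow> real" where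
  "tau_cmod_sq n d lam rho A = (\<Sum>I\<in>PiE A (\<lambda>_. {1..d\<^sup>2 - 1}). (cmod (corr n d lam rho A I))\<^sup>2)"

lemma tau_sq_le_tau_cmod_sq: "tau_sq n d lam rho A \<le> tau_cmod_sq n d lam rho A"
  unfolding tau_sq_def tau_cmod_sq_def by (intro sum_mono) (simp add: cmod_power2)

lemma sum_tau_cmod_sq_le:
  assumes gm: "gm_basis d lam" and "0 < d"
  shows "(\<Sum>A\<in>Pow {1..n}. tau_cmod_sq n d lam rho A)
      \<le> real d ^ n * (\<Sum>x\<in>configs {1..n} d. \<Sum>y\<in>configs {1..n} d. (cmod (rho x y))\<^sup>2)"
proof -
  let ?S = "{1..n}"
  let ?Sig = "Sigma (Pow ?S) (\<lambda>A. PiE A (\<lambda>_. {1..d\<^sup>2 - 1}))"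
  let ?pad = "\<lambda>(A, I). pad_index ?S A I"
  let ?f = "\<lambda>J. (cmod (bloch_coeff lam ?S d rho J))\<^sup>2"
  have "(\<Sum>A\<in>Pow ?S. tau_cmod_sq n d lam rho A)
      = (\<Sum>A\<in>Pow ?S. \<Sum>I\<in>PiE A (\<lambda>_. {1..d\<^sup>2 - 1}). ?f (pad_index ?S A I))"
    unfolding tau_cmod_sq_def
  proof (intro sum.cong refl)
    fix A I assume "A \<in> Pow ?S" "I \<in> PiE A (\<lambda>_. {1..d\<^sup>2 - 1})"
    then have "A \<subseteq> ?S" "\<forall>k\<in>A. I k \<noteq> 0" by (auto simp: PiE_iff)
    then show "(cmod (corr n d lam rho A I))\<^sup>2 = ?f (pad_index ?S A I)"
      using corr_eq_bloch_coeff bloch_coeff_reduced by metis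
  qed
  also have "\<dots> = (\<Sum>(A, I)\<in>?Sig. ?f (pad_index ?S A I))"
    by (rule sum.Sigma) (auto intro!: finite_PiE intro: finite_subset)
  also have "\<dots> = sum ?f (?pad ` ?Sig)"
    using sum.reindex[OF inj_on_pad_index, of ?f] by (simp add: case_prod_beta)
  also have "\<dots> \<le> (\<Sum>J\<in>PiE ?S (\<lambda>_. {..<d\<^sup>2}). ?f J)"
  proof (intro sum_mono2 finite_PiE image_subsetI)
    fix p assume "p \<in> ?Sig"
    then obtain A I where "p = (A, I)" "A \<subseteq> ?S" "I \<in> PiE A (\<lambda>_. {1..d\<^sup>2 - 1})" by auto
    moreover have "d\<^sup>2 - 1 < d\<^sup>2" using \<open>0 < d\<close> by simp
    ultimately show "?pad p \<in> PiE ?S (\<lambda>_. {..<d\<^sup>2})" using pad_index_in_PiE by simp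
  qed auto
  also have "\<dots> = real d ^ n * (\<Sum>x\<in>configs ?S d. \<Sum>y\<in>configs ?S d. (cmod (rho x y))\<^sup>2)"
    using bloch_coeff_parseval[OF gm \<open>0 < d\<close>, of ?S rho] by simp
  finally show ?thesis .
qed

lemma trace_reduced:
  assumes "A \<subseteq> {1..n}"
  shows "(\<Sum>x\<in>configs A d. reduced n d rho A x x) = (\<Sum>x\<in>configs {1..n} d. rho x x)"
  unfolding reduced_def by (rule sum_configs_merge[OF assms, symmetric])

lemma cmod_trace_sq_le_rank_single_red:
  "(cmod (\<Sum>x\<in>configs {i} d. reduced n d rho {i} x x))\<^sup>2
    \<le> real (vec_space.rank d (single_red n d rho i))
      * (\<Sum>x\<in>configs {i} d. \<Sum>y\<in>configs {i} d. (cmod (reduced n d rho {i} x y))\<^sup>2)"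
proof -
  let ?M = "single_red n d rho i"
  have entry: "?M $$ (a, b) = reduced n d rho {i} (pt i a) (pt i b)" if "a < d" "b < d" for a b
    using that unfolding single_red_def by simp
  have "?M \<in> carrier_mat d d" unfolding single_red_def by simp
  from cmod_trace_sq_le_rank[OF this] show ?thesis
    unfolding configs_def sum_PiE_singleton by (simp add: entry)
qed

lemma tau_cmod_sq_singleton_ge:
  assumes gm: "gm_basis d lam" and "0 < d" and i: "i \<in> {1..n}"
    and trace: "(\<Sum>x\<in>configs {1..n} d. rho x x) = 1"
    and rank: "vec_space.rank d (single_red n d rho i) \<le> k" and "0 < k"
  shows "real d / real k - 1 \<le> tau_cmod_sq n d lam rho {i}"
proof -
  let ?r = "reduced n d rho {i}"
  let ?C = "configs {i} d"
  let ?T = "\<lambda>m. bloch_coeff lam {i} d ?r (pt i m)"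
  let ?F = "\<Sum>x\<in>?C. \<Sum>y\<in>?C. (cmod (?r x y))\<^sup>2"
  have trace_i: "(\<Sum>x\<in>?C. ?r x x) = 1"
    using trace_reduced[where A = "{i}"] i trace by simp
  have "(\<Sum>m<d\<^sup>2. (cmod (?T m))\<^sup>2) = real d * ?F"
    using bloch_coeff_parseval[OF gm \<open>0 < d\<close>, of "{i}" ?r] by (simp add: sum_PiE_singleton)
  moreover have "{..<d\<^sup>2} = insert 0 {1..d\<^sup>2 - 1}" using \<open>0 < d\<close> by auto
  moreover have "?T 0 = 1"
    using bloch_coeff_identity[of "{i}" "pt i 0"] trace_i by (simp add: pt_def)
  moreover have "tau_cmod_sq n d lam rho {i} = (\<Sum>m\<in>{1..d\<^sup>2 - 1}. (cmod (?T m))\<^sup>2)"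
    unfolding tau_cmod_sq_def sum_PiE_singleton
    by (intro sum.cong refl) (simp add: corr_eq_bloch_coeff pt_def)
  ultimately have tau: "tau_cmod_sq n d lam rho {i} = real d * ?F - 1" by simp
  have "1 \<le> real (vec_space.rank d (single_red n d rho i)) * ?F"
    using cmod_trace_sq_le_rank_single_red[where i = i and rho = rho and n = n and d = d] trace_i by simp
  also have "\<dots> \<le> real k * ?F"
    using rank by (intro mult_right_mono sum_nonneg) auto
  finally have "1 \<le> real k * ?F" .
  then have "real d / real k \<le> real d * (real k * ?F) / real k"
    using mult_left_mono[of 1 "real k * ?F" "real d"] by (intro divide_right_mono) auto
  also have "\<dots> = real d * ?F" using \<open>0 < k\<close> by simp
  finally have "real d / real k \<le> real d * ?F" .
  then show ?thesis using tau by linarith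
qed

lemma tau_cmod_sq_empty:
  assumes "(\<Sum>x\<in>configs {1..n} d. rho x x) = 1"
  shows "tau_cmod_sq n d lam rho {} = 1"
  using trace_reduced[where A = "{}" and rho = rho and n = n and d = d] assms
  by (simp add: tau_cmod_sq_def corr_def configs_def)

lemma Pow_diff_card_ge_2:
  "Pow {1..n} - {A. A \<subseteq> {1..n} \<and> 2 \<le> card A} = insert {} ((\<lambda>i. {i}) ` {1..n::nat})"
proof (intro equalityI subsetI)
  fix A assume "A \<in> Pow {1..n} - {A. A \<subseteq> {1..n} \<and> 2 \<le> card A}"
  then have "A \<subseteq> {1..n}" "card A = 0 \<or> card A = 1" by auto
  moreover have "finite A" using \<open>A \<subseteq> {1..n}\<close> finite_subset by blast
  ultimately show "A \<in> insert {} ((\<lambda>i. {i}) ` {1..n})" by (auto simp: card_1_singleton_iff)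
qed auto

lemma C2_le_of_rank_le:
  assumes gm: "gm_basis d lam" and "0 < d" and k: "\<forall>i\<in>{1..n}. 0 < k i"
    and trace: "(\<Sum>x\<in>configs {1..n} d. rho x x) = 1"
    and purity: "(\<Sum>x\<in>configs {1..n} d. \<Sum>y\<in>configs {1..n} d. (cmod (rho x y))\<^sup>2) \<le> 1"
    and rank: "\<forall>i\<in>{1..n}. vec_space.rank d (single_red n d rho i) \<le> k i"
  shows "C2 n d lam rho \<le> real d ^ n + real n - 1 - (\<Sum>i=1..n. real d / real (k i))"
proof -
  let ?S = "{1..n}"
  let ?B2 = "{A. A \<subseteq> ?S \<and> 2 \<le> card A}"
  let ?t = "tau_cmod_sq n d lam rho"
  have "C2 n d lam rho \<le> sum ?t ?B2"
    unfolding C2_def by (intro sum_mono tau_sq_le_tau_cmod_sq)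
  also have "sum ?t (Pow ?S) = ?t {} + (\<Sum>i\<in>?S. ?t {i}) + sum ?t ?B2"
  proof -
    have "sum ?t (Pow ?S) = sum ?t (Pow ?S - ?B2) + sum ?t ?B2"
      by (rule sum.subset_diff) auto
    also have "sum ?t (Pow ?S - ?B2) = ?t {} + (\<Sum>i\<in>?S. ?t {i})"
      unfolding Pow_diff_card_ge_2 by (subst sum.insert) (auto simp: sum.reindex)
    finally show ?thesis .
  qed
  moreover have "sum ?t (Pow ?S) \<le> real d ^ n"
    using sum_tau_cmod_sq_le[OF gm \<open>0 < d\<close>, of n rho] mult_left_le[OF purity, of "real d ^ n"] by simp
  moreover have "?t {} = 1" using trace by (rule tau_cmod_sq_empty)
  moreover have "(\<Sum>i\<in>?S. real d / real (k i) - 1) \<le> (\<Sum>i\<in>?S. ?t {i})"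
    using tau_cmod_sq_singleton_ge[where n = n and rho = rho, OF gm \<open>0 < d\<close> _ trace] rank k by (intro sum_mono) blast
  ultimately show ?thesis by (simp add: sum_subtractf)
qed

section \<open>Pure states and mixtures\<close>

lemma trace_proj: "(\<Sum>x\<in>C. proj psi x x) = complex_of_real (\<Sum>x\<in>C. (cmod (psi x))\<^sup>2)"
  unfolding proj_def by (simp only: of_real_sum_cmod_sq)

lemma purity_proj: "(\<Sum>x\<in>C. \<Sum>y\<in>C. (cmod (proj psi x y))\<^sup>2) = (\<Sum>x\<in>C. (cmod (psi x))\<^sup>2)\<^sup>2"
  by (simp add: proj_def norm_mult power_mult_distrib power2_eq_square[of "sum _ _"] sum_product)

lemma power2_sum_weighted_le:
  fixes p r :: "'j \<Rightarrow> real"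
  assumes "\<forall>j\<in>J. 0 \<le> p j" "(\<Sum>j\<in>J. p j) = 1"
  shows "(\<Sum>j\<in>J. p j * r j)\<^sup>2 \<le> (\<Sum>j\<in>J. p j * (r j)\<^sup>2)"
proof -
  define m where "m = (\<Sum>j\<in>J. p j * r j)"
  have "0 \<le> (\<Sum>j\<in>J. p j * (r j - m)\<^sup>2)" using assms(1) by (intro sum_nonneg) auto
  also have "\<dots> = (\<Sum>j\<in>J. p j * (r j)\<^sup>2) - 2 * m * (\<Sum>j\<in>J. p j * r j) + m\<^sup>2 * (\<Sum>j\<in>J. p j)"
    by (simp add: power2_diff algebra_simps sum.distrib sum_subtractf sum_distrib_left sum_distrib_right)
  finally show ?thesis using assms(2) unfolding m_def by (simp add: power2_eq_square)
qed

lemma corr_mixture: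
  assumes "A \<subseteq> {1..n}"
    and mix: "\<forall>x\<in>configs {1..n} d. \<forall>y\<in>configs {1..n} d. rho x y = (\<Sum>j\<in>J. complex_of_real (p j) * sigma j x y)"
  shows "corr n d lam rho A I = (\<Sum>j\<in>J. complex_of_real (p j) * corr n d lam (sigma j) A I)"
proof -
  have "reduced n d rho A x y = (\<Sum>j\<in>J. complex_of_real (p j) * reduced n d (sigma j) A x y)"
    if "x \<in> configs A d" "y \<in> configs A d" for x y
    unfolding reduced_def sum_distrib_left
    using mix merge_in_configs[OF assms(1) that(1)] merge_in_configs[OF assms(1) that(2)]
    by (subst sum.swap) (intro sum.cong refl, auto)
  then show ?thesis
    unfolding corr_def
    by (simp add: sum_distrib_left sum_distrib_right sum.swap[of _ J] mult.assoc cong: sum.cong)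
qed

lemma C2_mixture_le:
  assumes "\<forall>j\<in>J. 0 \<le> p j" "(\<Sum>j\<in>J. p j) = 1"
    and mix: "\<forall>x\<in>configs {1..n} d. \<forall>y\<in>configs {1..n} d. rho x y = (\<Sum>j\<in>J. complex_of_real (p j) * sigma j x y)"
  shows "C2 n d lam rho \<le> (\<Sum>j\<in>J. p j * C2 n d lam (sigma j))"
proof -
  let ?B2 = "{A. A \<subseteq> {1..n} \<and> 2 \<le> card A}"
  let ?c = "\<lambda>j A I. Re (corr n d lam (sigma j) A I)"
  have "C2 n d lam rho = (\<Sum>A\<in>?B2. \<Sum>I\<in>PiE A (\<lambda>_. {1..d\<^sup>2 - 1}). (\<Sum>j\<in>J. p j * ?c j A I)\<^sup>2)"
    unfolding C2_def tau_sq_def using corr_mixture[OF _ mix] by (intro sum.cong refl) (simp add: Re_sum)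
  also have "\<dots> \<le> (\<Sum>A\<in>?B2. \<Sum>I\<in>PiE A (\<lambda>_. {1..d\<^sup>2 - 1}). \<Sum>j\<in>J. p j * (?c j A I)\<^sup>2)"
    by (intro sum_mono power2_sum_weighted_le assms(1,2))
  also have "\<dots> = (\<Sum>j\<in>J. p j * C2 n d lam (sigma j))"
    unfolding C2_def tau_sq_def by (simp add: sum_distrib_left sum.swap[of _ J])
  finally show ?thesis .
qed

theorem theorem3:
  fixes n d :: nat and k :: "nat \<Rightarrow> nat"
    and lam :: "nat \<Rightarrow> nat \<Rightarrow> nat \<Rightarrow> complex"
    and rho :: "(nat \<Rightarrow> nat) \<Rightarrow> (nat \<Rightarrow> nat) \<Rightarrow> complex"
    and J :: "'j set" and p :: "'j \<Rightarrow> real" and psi :: "'j \<Rightarrow> (nat \<Rightarrow> nat) \<Rightarrow> complex"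
  assumes "n \<ge> 1" and "d \<ge> 2"
    and "\<forall>i\<in>{1..n}. k i \<in> {1..d}"
    and "gm_basis d lam"
    and "finite J"
    and "\<forall>j\<in>J. p j \<ge> 0" and "(\<Sum>j\<in>J. p j) = 1"
    and "\<forall>j\<in>J. (\<Sum>x\<in>configs {1..n} d. (cmod (psi j x))\<^sup>2) = 1"
    and "\<forall>x\<in>configs {1..n} d. \<forall>y\<in>configs {1..n} d.
           rho x y = (\<Sum>j\<in>J. complex_of_real (p j) * proj (psi j) x y)"
    and "\<forall>j\<in>J. \<forall>i\<in>{1..n}. vec_space.rank d (single_red n d (proj (psi j)) i) \<le> k i"
  shows "C2 n d lam rho \<le> real d ^ n + real n - 1 - (\<Sum>i=1..n. real d / real (k i))"
proof -
  let ?b = "real d ^ n + real n - 1 - (\<Sum>i=1..n. real d / real (k i))"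
  have "C2 n d lam rho \<le> (\<Sum>j\<in>J. p j * C2 n d lam (proj (psi j)))"
    using C2_mixture_le assms(6,7,9) .
  also have "\<dots> \<le> (\<Sum>j\<in>J. p j * ?b)"
  proof (intro sum_mono mult_left_mono)
    fix j assume "j \<in> J"
    show "C2 n d lam (proj (psi j)) \<le> ?b"
    proof (rule C2_le_of_rank_le[OF assms(4)])
      show "0 < d" using assms(2) by simp
    qed (use assms(3,8,10) \<open>j \<in> J\<close> in \<open>auto simp: trace_proj purity_proj\<close>)
    show "0 \<le> p j" using assms(6) \<open>j \<in> J\<close> by simp
  qed
  also have "\<dots> = ?b" using assms(7) by (simp flip: sum_distrib_right)
  finally show ?thesis .
qed

end
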